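(* For every $*$-term of the form $P\land^\circ Q$ (with $P$ a $*$-term and $Q\in P^d$), the tree $se(P\land^\circ Q)$ has no candidate disjunction decomposition. For every $*$-term of the form $P\lor^\circ Q$ (with $P$ a $*$-term and $Q\in P^c$), the tree $se(P\lor^\circ Q)$ has no candidate conjunction decomposition.
   Context: Let $A$ be a nonempty set of atoms; terms are closed terms over constants $\mathsf T,\mathsf F$, atoms $a\in A$, unary $\neg$, binary $\land^\circ$, $\lor^\circ$. Evaluation trees $\mathcal T_A$: $\mathsf T,\mathsf F\in\mathcal T_A$ and $(X\unlhd a\unrhd Y)\in\mathcal T_A$ for $X,Y\in\mathcal T_A$, $a\in A$. $\mathcal T_{A,\triangle}$: the same with leaves in $\{\mathsf T,\mathsf F,\triangle\}$. Leaf replacement $X[\ell_1\mapsto Y_1,\ldots]$ replaces every leaf labelled $\ell_i$ by $Y_i$. $se$: $se(\mathsf T)=\mathsf T$, $se(\mathsf F)=\mathsf F$, $se(a)=\mathsf T\unlhd a\unrhd\mathsf F$, $se(\neg P)=se(P)[\mathsf T\mapsto\mathsf F,\mathsf F\mapsto\mathsf T]$, $se(P\land^\circ Q)=se(P)[\mathsf T\mapsto se(Q)]$, $se(P\lor^\circ Q)=se(P)[\mathsf F\mapsto se(Q)]$. Syntactic categories ($a\in A$): $\mathsf T$-terms $P^{\mathsf T}::=\mathsf T\mid(a\land^\circ P^{\mathsf T})\lor^\circ P^{\mathsf T}$; $\mathsf F$-terms $P^{\mathsf F}::=\mathsf F\mid(a\lor^\circ P^{\mathsf F})\land^\circ P^{\mathsf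 F}$; $\ell$-terms $P^\ell::=(a\land^\circ P^{\mathsf T})\lor^\circ P^{\mathsf F}\mid(\neg a\land^\circ P^{\mathsf T})\lor^\circ P^{\mathsf F}$; $*$-terms $P^*::=P^c\mid P^d$, $P^c::=P^\ell\mid P^*\land^\circ P^d$, $P^d::=P^\ell\mid P^*\lor^\circ P^c$. A pair $(Y,Z)\in\mathcal T_{A,\triangle}\times\mathcal T_A$ is a candidate conjunction decomposition (ccd) of $X\in\mathcal T_A$ if $X=Y[\triangle\mapsto Z]$, $Y$ contains $\triangle$, $Y$ contains $\mathsf F$ but not $\mathsf T$, and $Z$ contains both $\mathsf T$ and $\mathsf F$. It is a candidate disjunction decomposition (cdd) of $X$ if $X=Y[\triangle\mapsto Z]$, $Y$ contains $\triangle$, $Y$ contains $\mathsf T$ but not $\mathsf F$, and $Z$ contains both $\mathsf T$ and $\mathsf F$ ("contains" refers to leaf labels). *)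

theory Defs
  imports Main
begin

datatype 'a pterm =
    TT
  | FF
  | Atom 'a
  | Neg "'a pterm"
  | LAnd "'a pterm" "'a pterm"   (* left-sequential conjunction  P \<and>\<^sup>\<circ> Q *)
  | LOr  "'a pterm" "'a pterm"   (* left-sequential disjunction  P \<or>\<^sup>\<circ> Q *)

text \<open>Leaf labels T, F and the extra placeholder label triangle.\<close>
datatype leaf = LT | LF | LTri

datatype 'a etree = Leaf leaf | Node "'a etree" 'a "'a etree"
  (* Node X a Y  represents  X \<unlhd> a \<unrhd> Y *)

fun leaves :: "'a etree \<Rightarrow> leaf set" where
  "leaves (Leaf l) = {l}"
| "leaves (Node X a Y) = leaves X \<union> leaves Y"

definition is_tree :: "'a etree \<Rightarrow> bool" where
  "is_tree X \<longleftrightarrow> LTri \<notin> leaves X"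

text \<open>Leaf replacement X[l1 \<mapsto> Y1, ...] given by a function on leaf labels
  (labels not replaced are mapped to the corresponding leaf).\<close>
fun repl :: "'a etree \<Rightarrow> (leaf \<Rightarrow> 'a etree) \<Rightarrow> 'a etree" where
  "repl (Leaf l) f = f l"
| "repl (Node X a Y) f = Node (repl X f) a (repl Y f)"

fun se :: "'a pterm \<Rightarrow> 'a etree" where
  "se TT = Leaf LT"
| "se FF = Leaf LF"
| "se (Atom a) = Node (Leaf LT) a (Leaf LF)"
| "se (Neg P) = repl (se P) ((Leaf)(LT := Leaf LF, LF := Leaf LT))"
| "se (LAnd P Q) = repl (se P) (Leaf(LT := se Q))"
| "se (LOr P Q) = repl (se P) (Leaf(LF := se Q))"

inductive T_term :: "'a pterm \<Rightarrow> bool" where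
  "T_term TT"
| "T_term P \<Longrightarrow> T_term Q \<Longrightarrow> T_term (LOr (LAnd (Atom a) P) Q)"

inductive F_term :: "'a pterm \<Rightarrow> bool" where
  "F_term FF"
| "F_term P \<Longrightarrow> F_term Q \<Longrightarrow> F_term (LAnd (LOr (Atom a) P) Q)"

inductive ell_term :: "'a pterm \<Rightarrow> bool" where
  "T_term P \<Longrightarrow> F_term Q \<Longrightarrow> ell_term (LOr (LAnd (Atom a) P) Q)"
| "T_term P \<Longrightarrow> F_term Q \<Longrightarrow> ell_term (LOr (LAnd (Neg (Atom a)) P) Q)"

inductive c_term :: "'a pterm \<Rightarrow> bool" and d_term :: "'a pterm \<Rightarrow> bool" where
  "ell_term P \<Longrightarrow> c_term P"
| "c_term P \<Longrightarrow> d_term Q \<Longrightarrow> c_term (LAnd P Q)"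
| "d_term P \<Longrightarrow> d_term Q \<Longrightarrow> c_term (LAnd P Q)"
| "ell_term P \<Longrightarrow> d_term P"
| "c_term P \<Longrightarrow> c_term Q \<Longrightarrow> d_term (LOr P Q)"
| "d_term P \<Longrightarrow> c_term Q \<Longrightarrow> d_term (LOr P Q)"

definition star_term :: "'a pterm \<Rightarrow> bool" where
  "star_term P \<longleftrightarrow> c_term P \<or> d_term P"

definition ccd :: "'a etree \<Rightarrow> 'a etree \<Rightarrow> 'a etree \<Rightarrow> bool" where
  "ccd Y Z X \<longleftrightarrow> is_tree Z \<and> X = repl Y (Leaf(LTri := Z)) \<and> LTri \<in> leaves Y
     \<and> LF \<in> leaves Y \<and> LT \<notin> leaves Y \<and> LT \<in> leaves Z \<and> LF \<in> leaves Z"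

definition cdd :: "'a etree \<Rightarrow> 'a etree \<Rightarrow> 'a etree \<Rightarrow> bool" where
  "cdd Y Z X \<longleftrightarrow> is_tree Z \<and> X = repl Y (Leaf(LTri := Z)) \<and> LTri \<in> leaves Y
     \<and> LT \<in> leaves Y \<and> LF \<notin> leaves Y \<and> LT \<in> leaves Z \<and> LF \<in> leaves Z"

end

theory Submission
  imports Defs
begin

text \<open>
  Suppose se (P and Q) = Y[hole := Z] with Y free of F-leaves. Each F-leaf of
  se P survives in se (P and Q), so it lies inside a copy of Z; hence Z is a subtree of
  se P with its T-leaves replaced by se Q, and Z is strictly larger than se Q. On the other
  hand Y has a T-leaf; it lies below a T-leaf of se P, i.e. inside a copy of se Q, and since
  se Q has an F-leaf but Y has none, a hole of Y sits inside that copy, so Z is no larger than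
  se Q. The disjunctive case is the same with T and F exchanged.
\<close>

lemma leaves_repl: "leaves (repl S f) = (\<Union>l\<in>leaves S. leaves (f l))"
  by (induction S) auto

lemma repl_id: "\<forall>l\<in>leaves S. f l = Leaf l \<Longrightarrow> repl S f = S"
  by (induction S) auto

lemma LTri_notin_leaves_se: "LTri \<notin> leaves (se P)"
  by (induction P) (auto simp: leaves_repl split: if_splits)

lemma leaves_se_T_term: "T_term P \<Longrightarrow> leaves (se P) = {LT}"
  by (induction rule: T_term.induct) (auto simp: leaves_repl)

lemma leaves_se_F_term: "F_term P \<Longrightarrow> leaves (se P) = {LF}"
  by (induction rule: F_term.induct) (auto simp: leaves_repl)

lemma leaves_se_ell_term: "ell_term P \<Longrightarrow> leaves (se P) = {LT, LF}"
  by (induction rule: ell_term.induct)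
    (auto simp: leaves_repl leaves_se_T_term leaves_se_F_term)

lemma leaves_se_c_term_d_term:
  "c_term (P :: 'a pterm) \<Longrightarrow> leaves (se P) = {LT, LF}"
  "d_term (Q :: 'a pterm) \<Longrightarrow> leaves (se Q) = {LT, LF}"
  by (induct P and Q rule: c_term_d_term.inducts) (auto simp: leaves_repl leaves_se_ell_term)

lemma leaves_se_star_term: "star_term P \<Longrightarrow> leaves (se P) = {LT, LF}"
  using leaves_se_c_term_d_term unfolding star_term_def by blast

lemma size_le_size_repl: "u \<in> leaves S \<Longrightarrow> size W \<le> size (repl S (Leaf(u := W)))"
  by (induction S) auto

lemma size_less_size_repl_Node:
  "u \<in> leaves (Node S1 a S2) \<Longrightarrow> size W < size (repl (Node S1 a S2) (Leaf(u := W)))"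
  using size_le_size_repl[of u S1 W] size_le_size_repl[of u S2 W] by auto

text \<open>
  Follow a u-leaf of Y down through S: it ends at a u-leaf of S, where the corresponding
  subtree of Y must expand to W; as W has a v-leaf and Y has none, that subtree contains a hole.
\<close>
lemma size_hole_le_if_repl_eq:
  assumes "repl Y (Leaf(LTri := Z)) = repl S (Leaf(u := W))" "LTri \<notin> leaves S"
    "v \<notin> leaves Y" "v \<in> leaves W" "u \<noteq> LTri" "v \<noteq> LTri" "u \<noteq> v"
  shows "u \<notin> leaves Y \<or> size Z \<le> size W"
  using assms
proof (induction S arbitrary: Y)
  case (Leaf l)
  show ?case
  proof (cases "l = u")
    case True
    show ?thesis
    proof (cases "LTri \<in> leaves Y")
      case True
      then show ?thesis
        using Leaf size_le_size_repl[of LTri Y Z] \<open>l = u\<close> by (auto simp: fun_upd_def)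
    next
      case False
      then have "repl Y (Leaf(LTri := Z)) = Y" by (intro repl_id) auto
      then show ?thesis using Leaf \<open>l = u\<close> by auto
    qed
  next
    case False
    then show ?thesis using Leaf by (cases Y) (auto split: if_splits)
  qed
next
  case (Node S1 a S2)
  then show ?case by (cases Y) (auto split: if_splits)
qed

text \<open>
  Follow a v-leaf of S down through Y: since Y has no v-leaf, the path meets a hole, and the
  subtree of S there expands to Z.
\<close>
lemma hole_eq_repl_subtree_if_repl_eq:
  assumes "repl Y (Leaf(LTri := Z)) = repl S (Leaf(u := W))" "LTri \<notin> leaves S"
    "v \<in> leaves S" "v \<notin> leaves Y" "u \<in> leaves Z" "u \<noteq> LTri" "v \<noteq> LTri" "u \<noteq> v"
  shows "\<exists>S1 a S2. u \<in> leaves (Node S1 a S2) \<and> Z = repl (Node S1 a S2) (Leaf(u := W))"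
  using assms
proof (induction S arbitrary: Y)
  case (Leaf l)
  then show ?case by (cases Y) (auto split: if_splits)
next
  case (Node S1 a S2)
  show ?case
  proof (cases Y)
    case (Leaf l)
    show ?thesis
    proof (cases "u \<in> leaves (Node S1 a S2)")
      case True
      then show ?thesis using Node.prems Leaf by (auto split: if_splits)
    next
      case False
      then have S_unchanged: "repl (Node S1 a S2) (Leaf(u := W)) = Node S1 a S2"
        by (intro repl_id) auto
      have "l = LTri" using Node.prems Leaf by (cases l) auto
      then have "Z = Node S1 a S2"
        using Node.prems(1) Leaf S_unchanged by (simp add: fun_upd_def)
      then show ?thesis using Node.prems(5) False by simp
    qed
  next
    case (Node Y1 b Y2)
    then show ?thesis using Node.IH Node.prems by auto
  qed
qed

lemma no_hole_decomposition_of_repl: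
  assumes "repl Y (Leaf(LTri := Z)) = repl S (Leaf(u := W))" "LTri \<notin> leaves S"
    "v \<in> leaves S" "v \<notin> leaves Y" "u \<in> leaves Z" "u \<in> leaves Y" "v \<in> leaves W"
    "u \<noteq> LTri" "v \<noteq> LTri" "u \<noteq> v"
  shows False
proof -
  have "size Z \<le> size W"
    using size_hole_le_if_repl_eq[OF assms(1,2,4,7,8,9,10)] assms(6) by auto
  moreover obtain S1 a S2 where
    "u \<in> leaves (Node S1 a S2)" "Z = repl (Node S1 a S2) (Leaf(u := W))"
    using hole_eq_repl_subtree_if_repl_eq[OF assms(1,2,3,4,5,8,9,10)] by blast
  then have "size W < size Z" using size_less_size_repl_Node by metis
  ultimately show False by simp
qed

theorem lemma3p5:
  fixes P Q :: "'a pterm"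
  shows "(star_term P \<and> d_term Q \<longrightarrow> (\<nexists>Y Z. cdd Y Z (se (LAnd P Q))))
       \<and> (star_term P \<and> c_term Q \<longrightarrow> (\<nexists>Y Z. ccd Y Z (se (LOr P Q))))"
proof (intro conjI impI notI)
  assume "star_term P \<and> d_term Q" and "\<exists>Y Z. cdd Y Z (se (LAnd P Q))"
  then obtain Y Z where "cdd Y Z (se (LAnd P Q))"
    and "leaves (se P) = {LT, LF}" "leaves (se Q) = {LT, LF}"
    using leaves_se_star_term leaves_se_c_term_d_term by blast
  then show False
    using no_hole_decomposition_of_repl[of Y Z "se P" LT "se Q" LF] LTri_notin_leaves_se[of P]
    unfolding cdd_def by auto
next
  assume "star_term P \<and> c_term Q" and "\<exists>Y Z. ccd Y Z (se (LOr P Q))"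
  then obtain Y Z where "ccd Y Z (se (LOr P Q))"
    and "leaves (se P) = {LT, LF}" "leaves (se Q) = {LT, LF}"
    using leaves_se_star_term leaves_se_c_term_d_term by blast
  then show False
    using no_hole_decomposition_of_repl[of Y Z "se P" LF "se Q" LT] LTri_notin_leaves_se[of P]
    unfolding ccd_def by auto
qed

end
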